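(* Let $\varphi : X\to X$ be a morphism in $\mathscr{C}$ with kernel $\kappa : K\to X$ and cokernel $\lambda : X\to L$. The following are equivalent: (1) $\varphi$ is both core invertible and dual core invertible; (2) $\varphi$ is both Moore–Penrose invertible and group invertible; (3) $\varphi$ is regular and $\kappa\lambda : K\to L$, $\kappa\kappa^{*} : K\to K$ and $\lambda^{*}\lambda : L\to L$ are all invertible. In this case, for every $\psi : X\to X$ with $\varphi\psi\varphi=\varphi$, $$\varphi^{\dagger}=[1_X-\lambda(\lambda^{*}\lambda)^{-1}\lambda^{*}]\psi[1_X-\kappa^{*}(\kappa\kappa^{*})^{-1}\kappa],$$ $$\varphi^{\#}=[1_X-\lambda(\kappa\lambda)^{-1}\kappa]\psi[1_X-\lambda(\kappa\lambda)^{-1}\kappa],$$ $$\varphi^{\mathrm{core}}=[1_X-\lambda(\kappa\lambda)^{-1}\kappa]\psi[1_X-\kappa^{*}(\kappa\kappa^{*})^{-1}\kappa],$$ $$\varphi_{\mathrm{core}}=[1_X-\lambda(\lambda^{*}\lambda)^{-1}\lambda^{*}]\psi[1_X-\lambda(\kappa\lambda)^{-1}\kappa].$$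
   Context: $\mathscr{C}$ is an additive category with an involution $*$: a map on morphisms sending $\varphi : X\to Y$ to $\varphi^* : Y \to X$ such that $(\varphi^* )^*=\varphi$, $(\varphi\psi)^*=\psi^*\varphi^*$ and $(\varphi+\phi)^*=\varphi^*+\phi^*$. Composition is written left to right: for $\varphi : X\to Y$ and $\psi : Y\to Z$, $\varphi\psi : X \to Z$ means "first $\varphi$, then $\psi$". A kernel of $\varphi : X\to Y$ is a morphism $\kappa : K\to X$ with $\kappa\varphi=0$ such that every $\alpha : M\to X$ with $\alpha\varphi=0$ factors uniquely as $\alpha=\alpha'\kappa$. A cokernel of $\varphi$ is a morphism $\lambda : Y\to L$ with $\varphi\lambda=0$ such that every $\beta : Y\to M$ with $\varphi\beta=0$ factors uniquely as $\beta=\lambda\beta'$. $\varphi$ is regular if there is $\chi$ with $\varphi\chi\varphi=\varphi$. A morphism is invertible if it has a two-sided inverse. For $\varphi : X\to X$ the following are defined. - The Moore–Penrose inverse $\varphi^\dagger$ is the unique $\chi$ with $\varphi\chi\varphi=\varphi$, $\chi\varphi\chi=\chi$, $(\varphi\chi)^*=\varphi\chi$ and $(\chi\varphi)^*=\chi\varphi$. - The group inverse $\varphi^{\#}$ is the unique $\chi$ with $\varphi\chi\varphi=\varphi$, $\chi\varphi\chi=\chi$ and $\varphi\chi=\chi\varphi$. - The core inverse $\varphi^{\mathrm{core}}$ is the unique $\chi$ with $(\varphi\chi)^*=\varphi\chi$, $\varphi\chi^2=\chi$ and $\chi\varphi^2=\varphi$. - The dual core inverse $\varphi_{\mathrm{core}}$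 is the unique $\chi$ with $(\chi\varphi)^*=\chi\varphi$, $\chi^2\varphi=\chi$ and $\varphi^2\chi=\varphi$. *)

theory Defs
  imports Main
begin

text \<open>An additive category with involution, with composition written left to right:
  cmp f g means "first f, then g".  Objects of type 'o, morphisms of type 'm.\<close>

record ('o, 'm) icat =
  Ob   :: "'o set"
  Mor  :: "'m set"
  Dom  :: "'m \<Rightarrow> 'o"
  Cod  :: "'m \<Rightarrow> 'o"
  cmp  :: "'m \<Rightarrow> 'm \<Rightarrow> 'm"
  idt  :: "'o \<Rightarrow> 'm"
  pls  :: "'m \<Rightarrow> 'm \<Rightarrow> 'm"
  ngt  :: "'m \<Rightarrow> 'm"
  zro  :: "'o \<Rightarrow> 'o \<Rightarrow> 'm"
  str  :: "'m \<Rightarrow> 'm"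

definition Hom :: "('o, 'm, 'x) icat_scheme \<Rightarrow> 'o \<Rightarrow> 'o \<Rightarrow> 'm set" where
  "Hom C X Y = {f \<in> Mor C. Dom C f = X \<and> Cod C f = Y}"

definition mns :: "('o, 'm, 'x) icat_scheme \<Rightarrow> 'm \<Rightarrow> 'm \<Rightarrow> 'm" where
  "mns C f g = pls C f (ngt C g)"

definition is_zero_object :: "('o, 'm, 'x) icat_scheme \<Rightarrow> 'o \<Rightarrow> bool" where
  "is_zero_object C Z \<longleftrightarrow> Z \<in> Ob C \<and>
     (\<forall>X\<in>Ob C. (\<exists>!f. f \<in> Hom C Z X) \<and> (\<exists>!f. f \<in> Hom C X Z))"

definition is_biproduct ::
  "('o, 'm, 'x) icat_scheme \<Rightarrow> 'o \<Rightarrow> 'o \<Rightarrow> 'o \<Rightarrow> 'm \<Rightarrow> 'm \<Rightarrow> 'm \<Rightarrow> 'm \<Rightarrow> bool" where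
  "is_biproduct C A B S i1 i2 p1 p2 \<longleftrightarrow> S \<in> Ob C \<and>
     i1 \<in> Hom C A S \<and> i2 \<in> Hom C B S \<and> p1 \<in> Hom C S A \<and> p2 \<in> Hom C S B \<and>
     cmp C i1 p1 = idt C A \<and> cmp C i2 p2 = idt C B \<and>
     cmp C i1 p2 = zro C A B \<and> cmp C i2 p1 = zro C B A \<and>
     pls C (cmp C p1 i1) (cmp C p2 i2) = idt C S"

definition additive_inv_category :: "('o, 'm, 'x) icat_scheme \<Rightarrow> bool" where
  "additive_inv_category C \<longleftrightarrow>
     \<comment> \<open>category\<close>
     (\<forall>f\<in>Mor C. Dom C f \<in> Ob C \<and> Cod C f \<in> Ob C) \<and>
     (\<forall>X\<in>Ob C. idt C X \<in> Hom C X X) \<and>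
     (\<forall>X\<in>Ob C. \<forall>Y\<in>Ob C. \<forall>Z\<in>Ob C. \<forall>f\<in>Hom C X Y. \<forall>g\<in>Hom C Y Z. cmp C f g \<in> Hom C X Z) \<and>
     (\<forall>f\<in>Mor C. \<forall>g\<in>Mor C. \<forall>h\<in>Mor C. Cod C f = Dom C g \<longrightarrow> Cod C g = Dom C h \<longrightarrow>
         cmp C (cmp C f g) h = cmp C f (cmp C g h)) \<and>
     (\<forall>f\<in>Mor C. cmp C (idt C (Dom C f)) f = f \<and> cmp C f (idt C (Cod C f)) = f) \<and>
     \<comment> \<open>hom-sets are abelian groups\<close>
     (\<forall>X\<in>Ob C. \<forall>Y\<in>Ob C. zro C X Y \<in> Hom C X Y \<and>
        (\<forall>f\<in>Hom C X Y. \<forall>g\<in>Hom C X Y. pls C f g \<in> Hom C X Y) \<and>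
        (\<forall>f\<in>Hom C X Y. ngt C f \<in> Hom C X Y) \<and>
        (\<forall>f\<in>Hom C X Y. \<forall>g\<in>Hom C X Y. \<forall>h\<in>Hom C X Y. pls C (pls C f g) h = pls C f (pls C g h)) \<and>
        (\<forall>f\<in>Hom C X Y. \<forall>g\<in>Hom C X Y. pls C f g = pls C g f) \<and>
        (\<forall>f\<in>Hom C X Y. pls C f (zro C X Y) = f) \<and>
        (\<forall>f\<in>Hom C X Y. pls C f (ngt C f) = zro C X Y)) \<and>
     \<comment> \<open>composition is bilinear\<close>
     (\<forall>X\<in>Ob C. \<forall>Y\<in>Ob C. \<forall>Z\<in>Ob C. \<forall>f\<in>Hom C X Y. \<forall>f'\<in>Hom C X Y. \<forall>g\<in>Hom C Y Z. \<forall>g'\<in>Hom C Y Z.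
        cmp C (pls C f f') g = pls C (cmp C f g) (cmp C f' g) \<and>
        cmp C f (pls C g g') = pls C (cmp C f g) (cmp C f g')) \<and>
     \<comment> \<open>zero object and binary biproducts\<close>
     (\<exists>Z. is_zero_object C Z) \<and>
     (\<forall>A\<in>Ob C. \<forall>B\<in>Ob C. \<exists>S i1 i2 p1 p2. is_biproduct C A B S i1 i2 p1 p2) \<and>
     \<comment> \<open>involution\<close>
     (\<forall>X\<in>Ob C. \<forall>Y\<in>Ob C. \<forall>f\<in>Hom C X Y. str C f \<in> Hom C Y X) \<and>
     (\<forall>f\<in>Mor C. str C (str C f) = f) \<and>
     (\<forall>f\<in>Mor C. \<forall>g\<in>Mor C. Cod C f = Dom C g \<longrightarrow> str C (cmp C f g) = cmp C (str C g) (str C f)) \<and>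
     (\<forall>X\<in>Ob C. \<forall>Y\<in>Ob C. \<forall>f\<in>Hom C X Y. \<forall>g\<in>Hom C X Y. str C (pls C f g) = pls C (str C f) (str C g))"

definition is_kernel :: "('o, 'm, 'x) icat_scheme \<Rightarrow> 'm \<Rightarrow> 'm \<Rightarrow> bool" where
  "is_kernel C \<phi> \<kappa> \<longleftrightarrow> \<kappa> \<in> Mor C \<and> Cod C \<kappa> = Dom C \<phi> \<and>
     cmp C \<kappa> \<phi> = zro C (Dom C \<kappa>) (Cod C \<phi>) \<and>
     (\<forall>\<alpha>\<in>Mor C. Cod C \<alpha> = Dom C \<phi> \<longrightarrow> cmp C \<alpha> \<phi> = zro C (Dom C \<alpha>) (Cod C \<phi>) \<longrightarrow>
        (\<exists>!\<alpha>'. \<alpha>' \<in> Hom C (Dom C \<alpha>) (Dom C \<kappa>) \<and> \<alpha> = cmp C \<alpha>' \<kappa>))"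

definition is_cokernel :: "('o, 'm, 'x) icat_scheme \<Rightarrow> 'm \<Rightarrow> 'm \<Rightarrow> bool" where
  "is_cokernel C \<phi> \<mu> \<longleftrightarrow> \<mu> \<in> Mor C \<and> Dom C \<mu> = Cod C \<phi> \<and>
     cmp C \<phi> \<mu> = zro C (Dom C \<phi>) (Cod C \<mu>) \<and>
     (\<forall>\<beta>\<in>Mor C. Dom C \<beta> = Cod C \<phi> \<longrightarrow> cmp C \<phi> \<beta> = zro C (Dom C \<phi>) (Cod C \<beta>) \<longrightarrow>
        (\<exists>!\<beta>'. \<beta>' \<in> Hom C (Cod C \<mu>) (Cod C \<beta>) \<and> \<beta> = cmp C \<mu> \<beta>'))"

definition regular :: "('o, 'm, 'x) icat_scheme \<Rightarrow> 'm \<Rightarrow> bool" where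
  "regular C \<phi> \<longleftrightarrow> (\<exists>\<chi>\<in>Hom C (Cod C \<phi>) (Dom C \<phi>). cmp C (cmp C \<phi> \<chi>) \<phi> = \<phi>)"

definition is_inverse :: "('o, 'm, 'x) icat_scheme \<Rightarrow> 'm \<Rightarrow> 'm \<Rightarrow> bool" where
  "is_inverse C \<phi> \<chi> \<longleftrightarrow> \<chi> \<in> Hom C (Cod C \<phi>) (Dom C \<phi>) \<and>
     cmp C \<phi> \<chi> = idt C (Dom C \<phi>) \<and> cmp C \<chi> \<phi> = idt C (Cod C \<phi>)"

definition invertible :: "('o, 'm, 'x) icat_scheme \<Rightarrow> 'm \<Rightarrow> bool" where
  "invertible C \<phi> \<longleftrightarrow> (\<exists>\<chi>. is_inverse C \<phi> \<chi>)"

definition inverse :: "('o, 'm, 'x) icat_scheme \<Rightarrow> 'm \<Rightarrow> 'm" where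
  "inverse C \<phi> = (THE \<chi>. is_inverse C \<phi> \<chi>)"

definition is_MP_inverse :: "('o, 'm, 'x) icat_scheme \<Rightarrow> 'm \<Rightarrow> 'm \<Rightarrow> bool" where
  "is_MP_inverse C \<phi> \<chi> \<longleftrightarrow> \<chi> \<in> Hom C (Dom C \<phi>) (Dom C \<phi>) \<and>
     cmp C (cmp C \<phi> \<chi>) \<phi> = \<phi> \<and> cmp C (cmp C \<chi> \<phi>) \<chi> = \<chi> \<and>
     str C (cmp C \<phi> \<chi>) = cmp C \<phi> \<chi> \<and> str C (cmp C \<chi> \<phi>) = cmp C \<chi> \<phi>"

definition is_group_inverse :: "('o, 'm, 'x) icat_scheme \<Rightarrow> 'm \<Rightarrow> 'm \<Rightarrow> bool" where
  "is_group_inverse C \<phi> \<chi> \<longleftrightarrow> \<chi> \<in> Hom C (Dom C \<phi>) (Dom C \<phi>) \<and>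
     cmp C (cmp C \<phi> \<chi>) \<phi> = \<phi> \<and> cmp C (cmp C \<chi> \<phi>) \<chi> = \<chi> \<and>
     cmp C \<phi> \<chi> = cmp C \<chi> \<phi>"

definition is_core_inverse :: "('o, 'm, 'x) icat_scheme \<Rightarrow> 'm \<Rightarrow> 'm \<Rightarrow> bool" where
  "is_core_inverse C \<phi> \<chi> \<longleftrightarrow> \<chi> \<in> Hom C (Dom C \<phi>) (Dom C \<phi>) \<and>
     str C (cmp C \<phi> \<chi>) = cmp C \<phi> \<chi> \<and>
     cmp C \<phi> (cmp C \<chi> \<chi>) = \<chi> \<and> cmp C \<chi> (cmp C \<phi> \<phi>) = \<phi>"

definition is_dual_core_inverse :: "('o, 'm, 'x) icat_scheme \<Rightarrow> 'm \<Rightarrow> 'm \<Rightarrow> bool" where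
  "is_dual_core_inverse C \<phi> \<chi> \<longleftrightarrow> \<chi> \<in> Hom C (Dom C \<phi>) (Dom C \<phi>) \<and>
     str C (cmp C \<chi> \<phi>) = cmp C \<chi> \<phi> \<and>
     cmp C (cmp C \<chi> \<chi>) \<phi> = \<chi> \<and> cmp C (cmp C \<phi> \<phi>) \<chi> = \<phi>"

definition MP_invertible where "MP_invertible C \<phi> \<longleftrightarrow> (\<exists>\<chi>. is_MP_inverse C \<phi> \<chi>)"
definition group_invertible where "group_invertible C \<phi> \<longleftrightarrow> (\<exists>\<chi>. is_group_inverse C \<phi> \<chi>)"
definition core_invertible where "core_invertible C \<phi> \<longleftrightarrow> (\<exists>\<chi>. is_core_inverse C \<phi> \<chi>)"
definition dual_core_invertible where "dual_core_invertible C \<phi> \<longleftrightarrow> (\<exists>\<chi>. is_dual_core_inverse C \<phi> \<chi>)"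

definition MP_inv where "MP_inv C \<phi> = (THE \<chi>. is_MP_inverse C \<phi> \<chi>)"
definition group_inv where "group_inv C \<phi> = (THE \<chi>. is_group_inverse C \<phi> \<chi>)"
definition core_inv where "core_inv C \<phi> = (THE \<chi>. is_core_inverse C \<phi> \<chi>)"
definition dual_core_inv where "dual_core_inv C \<phi> = (THE \<chi>. is_dual_core_inverse C \<phi> \<chi>)"

end

theory Submission
  imports Defs
begin

text \<open>
  Let \<open>\<psi>\<close> be an inner inverse of \<open>\<phi>\<close>. Then \<open>1 - \<phi>\<psi> = a\<kappa>\<close> with \<open>\<kappa>a = 1\<close> and
  \<open>1 - \<psi>\<phi> = \<mu>b\<close> with \<open>b\<mu> = 1\<close>: these idempotents split through the kernel and the cokernel.
  If \<open>\<phi>\<psi>\<close> (resp. \<open>\<psi>\<phi>\<close>) is self-adjoint, the splitting and its adjoint split the same idempotent,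
  so \<open>\<kappa>\<kappa>\<^sup>*\<close> (resp. \<open>\<mu>\<^sup>*\<mu>\<close>) is invertible; if \<open>\<phi>\<psi> = \<psi>\<phi>\<close>, the two splittings split the same
  idempotent and \<open>\<kappa>\<mu>\<close> is invertible.

  Conversely, the three inverses give idempotents \<open>P = 1 - \<mu>(\<mu>\<^sup>*\<mu>)\<^sup>-\<^sup>1\<mu>\<^sup>*\<close>,
  \<open>Q = 1 - \<kappa>\<^sup>*(\<kappa>\<kappa>\<^sup>*)\<^sup>-\<^sup>1\<kappa>\<close> and \<open>R = 1 - \<mu>(\<kappa>\<mu>)\<^sup>-\<^sup>1\<kappa>\<close> with \<open>\<phi>P = \<phi>\<close>, \<open>P\<mu> = 0\<close>,
  \<open>Q\<phi> = \<phi>\<close>, \<open>\<kappa>Q = 0\<close>, and \<open>R\<close> satisfying all four. Whenever \<open>\<phi>A = \<phi>\<close>, \<open>A\<psi>\<phi> = A\<close>,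
  \<open>B\<phi> = \<phi>\<close> and \<open>\<phi>\<psi>B = B\<close>, the sandwich \<open>\<chi> = A\<psi>B\<close> is a reflexive inner inverse with
  \<open>\<phi>\<chi> = B\<close> and \<open>\<chi>\<phi> = A\<close>; choosing \<open>(A, B)\<close> among \<open>P, Q, R\<close> makes it the Moore-Penrose,
  group, core or dual core inverse, and uniqueness of these inverses yields the formulas.
\<close>

section \<open>Additive categories with involution\<close>

locale additive_inv_cat =
  fixes C :: "('o, 'm, 'x) icat_scheme"
  assumes additive_inv_category: "additive_inv_category C"
begin

abbreviation comp (infixr "\<cdot>" 70) where "f \<cdot> g \<equiv> cmp C f g"

lemma Hom_iff: "f \<in> Hom C A B \<longleftrightarrow> f \<in> Mor C \<and> Dom C f = A \<and> Cod C f = B"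
  by (simp add: Hom_def)

lemma dom_ob: "f \<in> Mor C \<Longrightarrow> Dom C f \<in> Ob C"
  and cod_ob: "f \<in> Mor C \<Longrightarrow> Cod C f \<in> Ob C"
  using additive_inv_category unfolding additive_inv_category_def by auto

lemma
  assumes "f \<in> Mor C" "g \<in> Mor C" "Cod C f = Dom C g"
  shows comp_mor[simp]: "f \<cdot> g \<in> Mor C"
    and dom_comp[simp]: "Dom C (f \<cdot> g) = Dom C f"
    and cod_comp[simp]: "Cod C (f \<cdot> g) = Cod C g"
proof -
  have "\<forall>X\<in>Ob C. \<forall>Y\<in>Ob C. \<forall>Z\<in>Ob C. \<forall>f\<in>Hom C X Y. \<forall>g\<in>Hom C Y Z. f \<cdot> g \<in> Hom C X Z"
    using additive_inv_category unfolding additive_inv_category_def by (elim conjE)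
  moreover have "f \<in> Hom C (Dom C f) (Cod C f)" "g \<in> Hom C (Cod C f) (Cod C g)"
    using assms by (simp_all add: Hom_iff)
  ultimately have "f \<cdot> g \<in> Hom C (Dom C f) (Cod C g)"
    using assms dom_ob cod_ob by blast
  then show "f \<cdot> g \<in> Mor C" "Dom C (f \<cdot> g) = Dom C f" "Cod C (f \<cdot> g) = Cod C g"
    by (simp_all add: Hom_iff)
qed

lemma idt_mor[simp]: "A \<in> Ob C \<Longrightarrow> idt C A \<in> Mor C"
  and dom_idt[simp]: "A \<in> Ob C \<Longrightarrow> Dom C (idt C A) = A"
  and cod_idt[simp]: "A \<in> Ob C \<Longrightarrow> Cod C (idt C A) = A"
  using additive_inv_category unfolding additive_inv_category_def Hom_def by auto

lemma comp_assoc[simp]: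
  "\<lbrakk>f \<in> Mor C; g \<in> Mor C; h \<in> Mor C; Cod C f = Dom C g; Cod C g = Dom C h\<rbrakk>
   \<Longrightarrow> (f \<cdot> g) \<cdot> h = f \<cdot> (g \<cdot> h)"
  using additive_inv_category unfolding additive_inv_category_def by (elim conjE) blast

lemma idt_comp[simp]: "\<lbrakk>f \<in> Mor C; Dom C f = A\<rbrakk> \<Longrightarrow> idt C A \<cdot> f = f"
  and comp_idt[simp]: "\<lbrakk>f \<in> Mor C; Cod C f = A\<rbrakk> \<Longrightarrow> f \<cdot> idt C A = f"
  using additive_inv_category unfolding additive_inv_category_def by auto

text \<open>The simplifier normalizes products to the right-nested form, where an equation
  \<open>u \<cdot> v = w\<close> only applies at the end of a product; these variants apply it anywhere.\<close>

lemma comp_eq_extend: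
  "\<lbrakk>u \<cdot> v = w; u \<in> Mor C; v \<in> Mor C; h \<in> Mor C; Cod C u = Dom C v; Cod C v = Dom C h\<rbrakk>
   \<Longrightarrow> u \<cdot> (v \<cdot> h) = w \<cdot> h"
  by (metis comp_assoc)

lemma comp_eq_extend2:
  "\<lbrakk>u \<cdot> (v \<cdot> w) = r; u \<in> Mor C; v \<in> Mor C; w \<in> Mor C; h \<in> Mor C;
    Cod C u = Dom C v; Cod C v = Dom C w; Cod C w = Dom C h\<rbrakk>
   \<Longrightarrow> u \<cdot> (v \<cdot> (w \<cdot> h)) = r \<cdot> h"
  by (drule sym) simp

lemma hom_abelian_group:
  "\<forall>A\<in>Ob C. \<forall>B\<in>Ob C. zro C A B \<in> Hom C A B \<and>
     (\<forall>f\<in>Hom C A B. \<forall>g\<in>Hom C A B. pls C f g \<in> Hom C A B) \<and>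
     (\<forall>f\<in>Hom C A B. ngt C f \<in> Hom C A B) \<and>
     (\<forall>f\<in>Hom C A B. \<forall>g\<in>Hom C A B. \<forall>h\<in>Hom C A B. pls C (pls C f g) h = pls C f (pls C g h)) \<and>
     (\<forall>f\<in>Hom C A B. \<forall>g\<in>Hom C A B. pls C f g = pls C g f) \<and>
     (\<forall>f\<in>Hom C A B. pls C f (zro C A B) = f) \<and>
     (\<forall>f\<in>Hom C A B. pls C f (ngt C f) = zro C A B)"
  using additive_inv_category unfolding additive_inv_category_def by (elim conjE) assumption

lemma zro_mor[simp]: "\<lbrakk>A \<in> Ob C; B \<in> Ob C\<rbrakk> \<Longrightarrow> zro C A B \<in> Mor C"
  and dom_zro[simp]: "\<lbrakk>A \<in> Ob C; B \<in> Ob C\<rbrakk> \<Longrightarrow> Dom C (zro C A B) = A"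
  and cod_zro[simp]: "\<lbrakk>A \<in> Ob C; B \<in> Ob C\<rbrakk> \<Longrightarrow> Cod C (zro C A B) = B"
  using hom_abelian_group by (auto simp: Hom_iff)

lemma
  assumes "f \<in> Mor C" "g \<in> Mor C" "Dom C g = Dom C f" "Cod C g = Cod C f"
  shows pls_mor[simp]: "pls C f g \<in> Mor C"
    and dom_pls[simp]: "Dom C (pls C f g) = Dom C f"
    and cod_pls[simp]: "Cod C (pls C f g) = Cod C f"
    and pls_commute: "pls C f g = pls C g f"
  using hom_abelian_group[rule_format, of "Dom C f" "Cod C f"] assms dom_ob cod_ob by (auto simp: Hom_iff)

lemma ngt_mor[simp]: "f \<in> Mor C \<Longrightarrow> ngt C f \<in> Mor C"
  and dom_ngt[simp]: "f \<in> Mor C \<Longrightarrow> Dom C (ngt C f) = Dom C f"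
  and cod_ngt[simp]: "f \<in> Mor C \<Longrightarrow> Cod C (ngt C f) = Cod C f"
  and pls_ngt[simp]: "f \<in> Mor C \<Longrightarrow> pls C f (ngt C f) = zro C (Dom C f) (Cod C f)"
  using hom_abelian_group[rule_format, of "Dom C f" "Cod C f"] dom_ob cod_ob by (auto simp: Hom_iff)

lemma mns_mor[simp]: "\<lbrakk>f \<in> Mor C; g \<in> Mor C; Dom C g = Dom C f; Cod C g = Cod C f\<rbrakk> \<Longrightarrow> mns C f g \<in> Mor C"
  and dom_mns[simp]: "\<lbrakk>f \<in> Mor C; g \<in> Mor C; Dom C g = Dom C f; Cod C g = Cod C f\<rbrakk> \<Longrightarrow> Dom C (mns C f g) = Dom C f"
  and cod_mns[simp]: "\<lbrakk>f \<in> Mor C; g \<in> Mor C; Dom C g = Dom C f; Cod C g = Cod C f\<rbrakk> \<Longrightarrow> Cod C (mns C f g) = Cod C f"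
  by (simp_all add: mns_def)

lemma pls_assoc:
  "\<lbrakk>f \<in> Mor C; g \<in> Mor C; h \<in> Mor C; Dom C g = Dom C f; Cod C g = Cod C f; Dom C h = Dom C f; Cod C h = Cod C f\<rbrakk>
   \<Longrightarrow> pls C (pls C f g) h = pls C f (pls C g h)"
  using hom_abelian_group[rule_format, of "Dom C f" "Cod C f"] dom_ob cod_ob by (auto simp: Hom_iff)

lemma pls_zro[simp]: "\<lbrakk>f \<in> Mor C; Dom C f = A; Cod C f = B\<rbrakk> \<Longrightarrow> pls C f (zro C A B) = f"
  using hom_abelian_group[rule_format, of "Dom C f" "Cod C f"] dom_ob cod_ob by (auto simp: Hom_iff)

lemma zro_pls[simp]: "\<lbrakk>f \<in> Mor C; Dom C f = A; Cod C f = B\<rbrakk> \<Longrightarrow> pls C (zro C A B) f = f"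
  using pls_commute[of f "zro C A B"] dom_ob cod_ob by auto

lemma mns_self[simp]: "f \<in> Mor C \<Longrightarrow> mns C f f = zro C (Dom C f) (Cod C f)"
  by (simp add: mns_def)

lemma ngt_unique:
  assumes "f \<in> Mor C" "g \<in> Mor C" "Dom C g = Dom C f" "Cod C g = Cod C f"
    and "pls C f g = zro C (Dom C f) (Cod C f)"
  shows "g = ngt C f"
proof -
  have "g = pls C g (pls C f (ngt C f))" using assms by simp
  also have "\<dots> = pls C (pls C g f) (ngt C f)" using assms by (simp add: pls_assoc)
  also have "\<dots> = pls C (pls C f g) (ngt C f)" using assms pls_commute[of f g] by simp
  also have "\<dots> = ngt C f" using assms dom_ob cod_ob by simp
  finally show ?thesis .
qed

lemma ngt_ngt[simp]: "f \<in> Mor C \<Longrightarrow> ngt C (ngt C f) = f"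
  using ngt_unique[of "ngt C f" f] pls_commute[of f "ngt C f"] by simp

lemma zro_of_double:
  assumes "z \<in> Mor C" "pls C z z = z"
  shows "z = zro C (Dom C z) (Cod C z)"
proof -
  have "zro C (Dom C z) (Cod C z) = pls C (pls C z z) (ngt C z)" using assms by simp
  also have "\<dots> = pls C z (pls C z (ngt C z))" using assms(1) by (simp add: pls_assoc del: pls_ngt)
  also have "\<dots> = z" using assms dom_ob cod_ob by simp
  finally show ?thesis by simp
qed

lemma mns_eq_zro_iff:
  assumes "f \<in> Mor C" "g \<in> Mor C" "Dom C g = Dom C f" "Cod C g = Cod C f"
  shows "mns C f g = zro C (Dom C f) (Cod C f) \<longleftrightarrow> f = g"
  using ngt_unique[of f "ngt C g"] assms by (auto simp: mns_def) (metis ngt_ngt)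

lemma comp_bilinear:
  "\<forall>A\<in>Ob C. \<forall>B\<in>Ob C. \<forall>D\<in>Ob C. \<forall>f\<in>Hom C A B. \<forall>f'\<in>Hom C A B. \<forall>g\<in>Hom C B D. \<forall>g'\<in>Hom C B D.
     pls C f f' \<cdot> g = pls C (f \<cdot> g) (f' \<cdot> g) \<and> f \<cdot> pls C g g' = pls C (f \<cdot> g) (f \<cdot> g')"
  using additive_inv_category unfolding additive_inv_category_def by (elim conjE) assumption

lemma comp_pls:
  "\<lbrakk>f \<in> Mor C; g \<in> Mor C; g' \<in> Mor C; Cod C f = Dom C g; Dom C g' = Dom C g; Cod C g' = Cod C g\<rbrakk>
   \<Longrightarrow> f \<cdot> pls C g g' = pls C (f \<cdot> g) (f \<cdot> g')"
  using comp_bilinear[rule_format, of "Dom C f" "Cod C f" "Cod C g" f f g g'] dom_ob cod_ob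
  by (auto simp: Hom_iff)

lemma pls_comp:
  "\<lbrakk>f \<in> Mor C; f' \<in> Mor C; g \<in> Mor C; Cod C f = Dom C g; Dom C f' = Dom C f; Cod C f' = Cod C f\<rbrakk>
   \<Longrightarrow> pls C f f' \<cdot> g = pls C (f \<cdot> g) (f' \<cdot> g)"
  using comp_bilinear[rule_format, of "Dom C f" "Cod C f" "Cod C g" f f' g g] dom_ob cod_ob
  by (auto simp: Hom_iff)

lemma comp_zro[simp]:
  assumes "f \<in> Mor C" "Cod C f = B" "D \<in> Ob C"
  shows "f \<cdot> zro C B D = zro C (Dom C f) D"
proof -
  have B: "B \<in> Ob C" using assms cod_ob by auto
  have "pls C (f \<cdot> zro C B D) (f \<cdot> zro C B D) = f \<cdot> zro C B D"
    using assms B by (simp add: comp_pls[symmetric])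
  from zro_of_double[OF _ this] show ?thesis using assms B by simp
qed

lemma zro_comp[simp]:
  assumes "f \<in> Mor C" "Dom C f = B" "A \<in> Ob C"
  shows "zro C A B \<cdot> f = zro C A (Cod C f)"
proof -
  have B: "B \<in> Ob C" using assms dom_ob by auto
  have "pls C (zro C A B \<cdot> f) (zro C A B \<cdot> f) = zro C A B \<cdot> f"
    using assms B by (simp add: pls_comp[symmetric])
  from zro_of_double[OF _ this] show ?thesis using assms B by simp
qed

lemma comp_ngt:
  assumes "f \<in> Mor C" "g \<in> Mor C" "Cod C f = Dom C g"
  shows "f \<cdot> ngt C g = ngt C (f \<cdot> g)"
proof -
  have "pls C (f \<cdot> g) (f \<cdot> ngt C g) = zro C (Dom C f) (Cod C g)"
    using assms cod_ob by (simp add: comp_pls[symmetric])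
  then show ?thesis using ngt_unique[of "f \<cdot> g" "f \<cdot> ngt C g"] assms by simp
qed

lemma ngt_comp:
  assumes "f \<in> Mor C" "g \<in> Mor C" "Cod C f = Dom C g"
  shows "ngt C f \<cdot> g = ngt C (f \<cdot> g)"
proof -
  have "pls C (f \<cdot> g) (ngt C f \<cdot> g) = zro C (Dom C f) (Cod C g)"
    using assms dom_ob by (simp add: pls_comp[symmetric])
  then show ?thesis using ngt_unique[of "f \<cdot> g" "ngt C f \<cdot> g"] assms by simp
qed

lemma comp_mns:
  "\<lbrakk>f \<in> Mor C; g \<in> Mor C; g' \<in> Mor C; Cod C f = Dom C g; Dom C g' = Dom C g; Cod C g' = Cod C g\<rbrakk>
   \<Longrightarrow> f \<cdot> mns C g g' = mns C (f \<cdot> g) (f \<cdot> g')"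
  by (simp add: mns_def comp_pls comp_ngt)

lemma mns_comp:
  "\<lbrakk>f \<in> Mor C; f' \<in> Mor C; g \<in> Mor C; Cod C f = Dom C g; Dom C f' = Dom C f; Cod C f' = Cod C f\<rbrakk>
   \<Longrightarrow> mns C f f' \<cdot> g = mns C (f \<cdot> g) (f' \<cdot> g)"
  by (simp add: mns_def pls_comp ngt_comp)

lemma mns_zro[simp]: "\<lbrakk>f \<in> Mor C; Dom C f = A; Cod C f = B\<rbrakk> \<Longrightarrow> mns C f (zro C A B) = f"
  using ngt_unique[of "zro C A B" "zro C A B"] dom_ob cod_ob by (auto simp: mns_def)

lemma str_axioms:
  "(\<forall>A\<in>Ob C. \<forall>B\<in>Ob C. \<forall>f\<in>Hom C A B. str C f \<in> Hom C B A) \<and>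
   (\<forall>f\<in>Mor C. str C (str C f) = f) \<and>
   (\<forall>f\<in>Mor C. \<forall>g\<in>Mor C. Cod C f = Dom C g \<longrightarrow> str C (f \<cdot> g) = str C g \<cdot> str C f) \<and>
   (\<forall>A\<in>Ob C. \<forall>B\<in>Ob C. \<forall>f\<in>Hom C A B. \<forall>g\<in>Hom C A B. str C (pls C f g) = pls C (str C f) (str C g))"
  using additive_inv_category unfolding additive_inv_category_def by (elim conjE) (intro conjI)

lemma str_mor[simp]: "f \<in> Mor C \<Longrightarrow> str C f \<in> Mor C"
  and dom_str[simp]: "f \<in> Mor C \<Longrightarrow> Dom C (str C f) = Cod C f"
  and cod_str[simp]: "f \<in> Mor C \<Longrightarrow> Cod C (str C f) = Dom C f"
  and str_str[simp]: "f \<in> Mor C \<Longrightarrow> str C (str C f) = f"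
  using str_axioms[THEN conjunct1, rule_format, of "Dom C f" "Cod C f" f] str_axioms dom_ob cod_ob
  by (auto simp: Hom_iff)

lemma str_comp[simp]: "\<lbrakk>f \<in> Mor C; g \<in> Mor C; Cod C f = Dom C g\<rbrakk> \<Longrightarrow> str C (f \<cdot> g) = str C g \<cdot> str C f"
  using str_axioms by blast

lemma str_pls[simp]:
  "\<lbrakk>f \<in> Mor C; g \<in> Mor C; Dom C g = Dom C f; Cod C g = Cod C f\<rbrakk>
   \<Longrightarrow> str C (pls C f g) = pls C (str C f) (str C g)"
  using str_axioms[THEN conjunct2, THEN conjunct2, THEN conjunct2, rule_format,
      of "Dom C f" "Cod C f" f g] dom_ob cod_ob
  by (auto simp: Hom_iff)

lemma str_zro[simp]: "\<lbrakk>A \<in> Ob C; B \<in> Ob C\<rbrakk> \<Longrightarrow> str C (zro C A B) = zro C B A"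
  using zro_of_double[of "str C (zro C A B)"] str_pls[of "zro C A B" "zro C A B", symmetric] by simp

lemma str_ngt[simp]: "f \<in> Mor C \<Longrightarrow> str C (ngt C f) = ngt C (str C f)"
  using ngt_unique[of "str C f" "str C (ngt C f)"] str_pls[of f "ngt C f", symmetric] dom_ob cod_ob
  by simp

lemma str_mns[simp]:
  "\<lbrakk>f \<in> Mor C; g \<in> Mor C; Dom C g = Dom C f; Cod C g = Cod C f\<rbrakk>
   \<Longrightarrow> str C (mns C f g) = mns C (str C f) (str C g)"
  by (simp add: mns_def)

lemma str_idt[simp]:
  assumes "A \<in> Ob C"
  shows "str C (idt C A) = idt C A"
proof -
  have "idt C A = str C (str C (idt C A) \<cdot> idt C A)" using assms by simp
  also have "\<dots> = str C (idt C A) \<cdot> idt C A" using assms by (simp del: comp_idt)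
  also have "\<dots> = str C (idt C A)" using assms by simp
  finally show ?thesis by simp
qed

lemma inverse_unique:
  assumes "f \<in> Mor C" "is_inverse C f g" "is_inverse C f g'"
  shows "g = g'"
proof -
  have t: "g \<in> Mor C" "Dom C g = Cod C f" "Cod C g = Dom C f"
      "g' \<in> Mor C" "Dom C g' = Cod C f" "Cod C g' = Dom C f"
    and e: "f \<cdot> g' = idt C (Dom C f)" "g \<cdot> f = idt C (Cod C f)"
    using assms by (auto simp: is_inverse_def Hom_iff)
  have "g = g \<cdot> (f \<cdot> g')" using assms(1) t e by simp
  also have "\<dots> = (g \<cdot> f) \<cdot> g'" using assms(1) t by simp
  also have "\<dots> = g'" using assms(1) t e cod_ob by (simp del: comp_assoc)
  finally show ?thesis .
qed

lemma is_inverse_inverse: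
  assumes "f \<in> Mor C" "invertible C f"
  shows "is_inverse C f (inverse C f)"
  using assms inverse_unique unfolding invertible_def inverse_def by (metis theI)

lemma self_adjoint_inverse:
  assumes f: "f \<in> Mor C" "str C f = f" and g: "is_inverse C f g"
  shows "str C g = g"
proof -
  have t: "g \<in> Mor C" "Dom C g = Cod C f" "Cod C g = Dom C f"
    and e: "f \<cdot> g = idt C (Dom C f)" "g \<cdot> f = idt C (Cod C f)"
    using g by (auto simp: is_inverse_def Hom_iff)
  have dc: "Dom C f = Cod C f" using f dom_str by metis
  have "f \<cdot> str C g = str C (g \<cdot> f)" and "str C g \<cdot> f = str C (f \<cdot> g)"
    using f t by simp_all
  then have "f \<cdot> str C g = idt C (Dom C f)" "str C g \<cdot> f = idt C (Cod C f)"
    using e dc f cod_ob by simp_all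
  then have "is_inverse C f (str C g)" using f t dc by (simp add: is_inverse_def Hom_iff)
  then show ?thesis using inverse_unique f g by blast
qed

text \<open>Two splittings of one idempotent \<open>a \<cdot> k = m \<cdot> b\<close> have isomorphic splitting objects.\<close>
lemma is_inverse_comp_split:
  assumes t: "k \<in> Hom C K X" "a \<in> Hom C X K" "m \<in> Hom C X L" "b \<in> Hom C L X"
    and split: "k \<cdot> a = idt C K" "b \<cdot> m = idt C L" "a \<cdot> k = m \<cdot> b"
  shows "is_inverse C (k \<cdot> m) (b \<cdot> a)"
proof -
  have obs: "K \<in> Ob C" "L \<in> Ob C" using t dom_ob cod_ob by (auto simp: Hom_iff)
  have "k \<cdot> (m \<cdot> (b \<cdot> a)) = k \<cdot> ((m \<cdot> b) \<cdot> a)" using t by (simp add: Hom_iff)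
  also have "\<dots> = k \<cdot> ((a \<cdot> k) \<cdot> a)" by (simp only: split(3))
  also have "\<dots> = (k \<cdot> a) \<cdot> (k \<cdot> a)" using t by (simp add: Hom_iff)
  finally have km: "k \<cdot> (m \<cdot> (b \<cdot> a)) = idt C K" using t split(1) obs by (simp add: Hom_iff)
  have "b \<cdot> (a \<cdot> (k \<cdot> m)) = b \<cdot> ((a \<cdot> k) \<cdot> m)" using t by (simp add: Hom_iff)
  also have "\<dots> = b \<cdot> ((m \<cdot> b) \<cdot> m)" by (simp only: split(3))
  also have "\<dots> = (b \<cdot> m) \<cdot> (b \<cdot> m)" using t by (simp add: Hom_iff)
  finally have ba: "b \<cdot> (a \<cdot> (k \<cdot> m)) = idt C L" using t split(2) obs by (simp add: Hom_iff)
  show ?thesis using t km ba by (simp add: is_inverse_def Hom_iff)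
qed

section \<open>Uniqueness of the generalized inverses\<close>

lemma is_MP_inverseD:
  assumes "a \<in> Hom C X X" "is_MP_inverse C a x"
  shows "x \<in> Hom C X X" "a \<cdot> (x \<cdot> a) = a" "x \<cdot> (a \<cdot> x) = x"
    "str C (a \<cdot> x) = a \<cdot> x" "str C (x \<cdot> a) = x \<cdot> a"
  using assms by (auto simp: is_MP_inverse_def Hom_iff simp del: str_comp)

lemma is_group_inverseD:
  assumes "a \<in> Hom C X X" "is_group_inverse C a x"
  shows "x \<in> Hom C X X" "a \<cdot> (x \<cdot> a) = a" "x \<cdot> (a \<cdot> x) = x" "a \<cdot> x = x \<cdot> a"
proof -
  show x: "x \<in> Hom C X X" and "a \<cdot> x = x \<cdot> a"
    using assms by (simp_all add: is_group_inverse_def Hom_iff)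
  have "(a \<cdot> x) \<cdot> a = a" "(x \<cdot> a) \<cdot> x = x" using assms(2) unfolding is_group_inverse_def by blast+
  then show "a \<cdot> (x \<cdot> a) = a" "x \<cdot> (a \<cdot> x) = x" using assms(1) x by (simp_all add: Hom_iff)
qed

lemma MP_inverse_unique:
  assumes a: "a \<in> Hom C X X" and x: "is_MP_inverse C a x" and y: "is_MP_inverse C a y"
  shows "x = y"
proof -
  have t: "a \<in> Mor C" "Dom C a = X" "Cod C a = X" "x \<in> Mor C" "Dom C x = X" "Cod C x = X"
      "y \<in> Mor C" "Dom C y = X" "Cod C y = X"
    using is_MP_inverseD(1)[OF a x] is_MP_inverseD(1)[OF a y] a by (simp_all add: Hom_iff)
  have h: "a \<cdot> (x \<cdot> a) = a" "x \<cdot> (a \<cdot> x) = x" "str C x \<cdot> str C a = a \<cdot> x" "str C a \<cdot> str C x = x \<cdot> a"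
     "a \<cdot> (y \<cdot> a) = a" "y \<cdot> (a \<cdot> y) = y" "str C y \<cdot> str C a = a \<cdot> y" "str C a \<cdot> str C y = y \<cdot> a"
    using is_MP_inverseD(2-5)[OF a x] is_MP_inverseD(2-5)[OF a y] t by simp_all
  have sx: "str C a \<cdot> (str C x \<cdot> str C a) = str C a" and sy: "str C a \<cdot> (str C y \<cdot> str C a) = str C a"
    using arg_cong[OF h(1), of "str C"] arg_cong[OF h(5), of "str C"] t by simp_all
  have "x = x \<cdot> (str C x \<cdot> str C a)" using h by simp
  also have "\<dots> = x \<cdot> (str C x \<cdot> (str C a \<cdot> (str C y \<cdot> str C a)))" using sy by simp
  also have "\<dots> = x \<cdot> ((str C x \<cdot> str C a) \<cdot> (str C y \<cdot> str C a))" using t by simp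
  also have "\<dots> = x \<cdot> ((a \<cdot> x) \<cdot> (a \<cdot> y))" using h by simp
  also have "\<dots> = x \<cdot> (a \<cdot> y)" using t comp_eq_extend2[OF h(1), of y] by simp
  finally have x_eq: "x = x \<cdot> (a \<cdot> y)" .
  have "y = (y \<cdot> a) \<cdot> y" using h t by simp
  also have "\<dots> = (str C a \<cdot> str C y) \<cdot> y" using h by simp
  also have "\<dots> = ((str C a \<cdot> (str C x \<cdot> str C a)) \<cdot> str C y) \<cdot> y" using sx by simp
  also have "\<dots> = ((str C a \<cdot> str C x) \<cdot> (str C a \<cdot> str C y)) \<cdot> y" using t by simp
  also have "\<dots> = ((x \<cdot> a) \<cdot> (y \<cdot> a)) \<cdot> y" using h by simp
  also have "\<dots> = x \<cdot> (a \<cdot> (y \<cdot> (a \<cdot> y)))" using t by simp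
  also have "\<dots> = x \<cdot> (a \<cdot> y)" using h by simp
  finally show ?thesis using x_eq by simp
qed

lemma group_inverse_unique:
  assumes a: "a \<in> Hom C X X" and x: "is_group_inverse C a x" and y: "is_group_inverse C a y"
  shows "x = y"
proof -
  have t: "a \<in> Mor C" "Dom C a = X" "Cod C a = X" "x \<in> Mor C" "Dom C x = X" "Cod C x = X"
      "y \<in> Mor C" "Dom C y = X" "Cod C y = X"
    using is_group_inverseD(1)[OF a x] is_group_inverseD(1)[OF a y] a by (simp_all add: Hom_iff)
  note h = is_group_inverseD(2-4)[OF a x] is_group_inverseD(2-4)[OF a y]
  have "a \<cdot> x = (a \<cdot> (y \<cdot> a)) \<cdot> x" using h by simp
  also have "\<dots> = (a \<cdot> y) \<cdot> (a \<cdot> x)" using t by simp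
  also have "\<dots> = (y \<cdot> a) \<cdot> (x \<cdot> a)" using h by simp
  also have "\<dots> = y \<cdot> (a \<cdot> (x \<cdot> a))" using t by simp
  also have "\<dots> = a \<cdot> y" using h by simp
  finally have ax: "a \<cdot> x = a \<cdot> y" .
  have xa: "x \<cdot> a = a \<cdot> y" using h(3) ax by simp
  have "x = x \<cdot> (a \<cdot> y)" using h(2) ax by simp
  also have "\<dots> = (x \<cdot> a) \<cdot> y" using t by simp
  also have "\<dots> = (y \<cdot> a) \<cdot> y" by (simp only: xa h(6))
  also have "\<dots> = y" using t h(5) by simp
  finally show ?thesis .
qed

lemma is_core_inverseD:
  assumes a: "a \<in> Hom C X X" and "is_core_inverse C a x"
  shows "x \<in> Hom C X X" "str C (a \<cdot> x) = a \<cdot> x" "a \<cdot> (x \<cdot> a) = a" "x \<cdot> (a \<cdot> x) = x"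
    "is_group_inverse C a (x \<cdot> (x \<cdot> a))" "a \<cdot> (x \<cdot> (x \<cdot> a)) = x \<cdot> a"
proof -
  show x: "x \<in> Hom C X X" and "str C (a \<cdot> x) = a \<cdot> x"
    using assms by (simp_all add: is_core_inverse_def Hom_iff)
  have t: "a \<in> Mor C" "Dom C a = X" "Cod C a = X" "x \<in> Mor C" "Dom C x = X" "Cod C x = X"
    using a x by (simp_all add: Hom_iff)
  have h: "a \<cdot> (x \<cdot> x) = x" "x \<cdot> (a \<cdot> a) = a"
    using assms by (simp_all add: is_core_inverse_def)
  note e = comp_eq_extend2[OF h(1)] comp_eq_extend2[OF h(2)]
  have "a = (a \<cdot> (x \<cdot> x)) \<cdot> (a \<cdot> a)" using h by simp
  also have "\<dots> = a \<cdot> (x \<cdot> a)" using t h(2) by simp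
  finally show axa: "a \<cdot> (x \<cdot> a) = a" by simp
  have "x \<cdot> (a \<cdot> x) = x \<cdot> (a \<cdot> (a \<cdot> (x \<cdot> x)))" using h by simp
  also have "\<dots> = (x \<cdot> (a \<cdot> a)) \<cdot> (x \<cdot> x)" using t by simp
  also have "\<dots> = x" using t h by simp
  finally show xax: "x \<cdot> (a \<cdot> x) = x" .
  show "a \<cdot> (x \<cdot> (x \<cdot> a)) = x \<cdot> a" using t e by simp
  then show "is_group_inverse C a (x \<cdot> (x \<cdot> a))"
    using t e axa xax comp_eq_extend2[OF axa] comp_eq_extend2[OF xax] h
    by (simp add: is_group_inverse_def Hom_iff)
qed

lemma is_dual_core_inverseD:
  assumes a: "a \<in> Hom C X X" and "is_dual_core_inverse C a x"
  shows "x \<in> Hom C X X" "str C (x \<cdot> a) = x \<cdot> a" "a \<cdot> (x \<cdot> a) = a" "x \<cdot> (a \<cdot> x) = x"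
    "is_group_inverse C a (a \<cdot> (x \<cdot> x))" "a \<cdot> (x \<cdot> (x \<cdot> a)) = a \<cdot> x"
proof -
  show x: "x \<in> Hom C X X" and "str C (x \<cdot> a) = x \<cdot> a"
    using assms by (simp_all add: is_dual_core_inverse_def Hom_iff)
  have t: "a \<in> Mor C" "Dom C a = X" "Cod C a = X" "x \<in> Mor C" "Dom C x = X" "Cod C x = X"
    using a x by (simp_all add: Hom_iff)
  have h: "x \<cdot> (x \<cdot> a) = x" "a \<cdot> (a \<cdot> x) = a"
    using assms t by (simp_all add: is_dual_core_inverse_def)
  note e = comp_eq_extend2[OF h(1)] comp_eq_extend2[OF h(2)]
  have "a = a \<cdot> (a \<cdot> (x \<cdot> (x \<cdot> a)))" using h by simp
  also have "\<dots> = a \<cdot> (x \<cdot> a)" using t e by simp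
  finally show axa: "a \<cdot> (x \<cdot> a) = a" by (rule sym)
  have "x \<cdot> (a \<cdot> x) = (x \<cdot> (x \<cdot> a)) \<cdot> (a \<cdot> x)" using h by simp
  also have "\<dots> = x \<cdot> (x \<cdot> (a \<cdot> (a \<cdot> x)))" using t by simp
  also have "\<dots> = x" using t h by simp
  finally show xax: "x \<cdot> (a \<cdot> x) = x" .
  show "a \<cdot> (x \<cdot> (x \<cdot> a)) = a \<cdot> x" using t h by simp
  have "a \<cdot> (a \<cdot> (x \<cdot> x)) = a \<cdot> x" using t e by simp
  then show "is_group_inverse C a (a \<cdot> (x \<cdot> x))"
    using t e axa xax comp_eq_extend2[OF axa] comp_eq_extend2[OF xax] h
    by (simp add: is_group_inverse_def Hom_iff)
qed

lemma core_inverse_unique: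
  assumes a: "a \<in> Hom C X X" and x: "is_core_inverse C a x" and y: "is_core_inverse C a y"
  shows "x = y"
proof -
  note hx = is_core_inverseD[OF a x] and hy = is_core_inverseD[OF a y]
  have t: "a \<in> Mor C" "Dom C a = X" "Cod C a = X" "x \<in> Mor C" "Dom C x = X" "Cod C x = X"
      "y \<in> Mor C" "Dom C y = X" "Cod C y = X"
    using a hx(1) hy(1) by (simp_all add: Hom_iff)
  note e = comp_eq_extend2[OF hx(3)] comp_eq_extend2[OF hx(4)]
    comp_eq_extend2[OF hy(3)] comp_eq_extend2[OF hy(4)]
  have "a \<cdot> x = (a \<cdot> y) \<cdot> (a \<cdot> x)" "a \<cdot> y = (a \<cdot> x) \<cdot> (a \<cdot> y)"
    using t e hx(3) hy(3) by simp_all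
  then have ax: "a \<cdot> x = a \<cdot> y"
    using hx(2) hy(2) str_comp[of "a \<cdot> y" "a \<cdot> x"] t by simp
  have xa: "x \<cdot> a = y \<cdot> a"
    using hx(6) hy(6) group_inverse_unique[OF a hx(5) hy(5)] by simp
  have "x = (x \<cdot> a) \<cdot> x" using t hx(4) by simp
  also have "\<dots> = y \<cdot> (a \<cdot> y)" using t xa ax by simp
  also have "\<dots> = y" using hy(4) .
  finally show ?thesis .
qed

lemma dual_core_inverse_unique:
  assumes a: "a \<in> Hom C X X" and x: "is_dual_core_inverse C a x" and y: "is_dual_core_inverse C a y"
  shows "x = y"
proof -
  note hx = is_dual_core_inverseD[OF a x] and hy = is_dual_core_inverseD[OF a y]
  have t: "a \<in> Mor C" "Dom C a = X" "Cod C a = X" "x \<in> Mor C" "Dom C x = X" "Cod C x = X"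
      "y \<in> Mor C" "Dom C y = X" "Cod C y = X"
    using a hx(1) hy(1) by (simp_all add: Hom_iff)
  have "x \<cdot> a = str C ((x \<cdot> a) \<cdot> (y \<cdot> a))" using t hx(2) hy(3) by simp
  also have "\<dots> = (y \<cdot> a) \<cdot> (x \<cdot> a)" using t hx(2) hy(2) by (simp del: str_comp) simp
  also have "\<dots> = y \<cdot> a" using t hx(3) by simp
  finally have xa: "x \<cdot> a = y \<cdot> a" .
  have ax: "a \<cdot> x = a \<cdot> y"
    using hx(6) hy(6) group_inverse_unique[OF a hx(5) hy(5)] t by (metis comp_assoc comp_mor cod_comp dom_comp)
  have "x = x \<cdot> (a \<cdot> x)" using hx(4) by simp
  also have "\<dots> = (y \<cdot> a) \<cdot> y" using t xa ax by (simp flip: comp_assoc)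
  also have "\<dots> = y" using t hy(4) by simp
  finally show ?thesis .
qed

lemma MP_inv_eqI: "\<lbrakk>a \<in> Hom C X X; is_MP_inverse C a x\<rbrakk> \<Longrightarrow> MP_inv C a = x"
  unfolding MP_inv_def using MP_inverse_unique by blast

lemma group_inv_eqI: "\<lbrakk>a \<in> Hom C X X; is_group_inverse C a x\<rbrakk> \<Longrightarrow> group_inv C a = x"
  unfolding group_inv_def using group_inverse_unique by blast

lemma core_inv_eqI: "\<lbrakk>a \<in> Hom C X X; is_core_inverse C a x\<rbrakk> \<Longrightarrow> core_inv C a = x"
  unfolding core_inv_def using core_inverse_unique by blast

lemma dual_core_inv_eqI: "\<lbrakk>a \<in> Hom C X X; is_dual_core_inverse C a x\<rbrakk> \<Longrightarrow> dual_core_inv C a = x"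
  unfolding dual_core_inv_def using dual_core_inverse_unique by blast

end

section \<open>Sandwiching an inner inverse between projectors\<close>

locale projector_sandwich = additive_inv_cat +
  fixes X \<phi> \<psi> A B
  assumes homs: "\<phi> \<in> Hom C X X" "\<psi> \<in> Hom C X X" "A \<in> Hom C X X" "B \<in> Hom C X X"
    and left: "\<phi> \<cdot> A = \<phi>" "A \<cdot> (\<psi> \<cdot> \<phi>) = A"
    and right: "B \<cdot> \<phi> = \<phi>" "\<phi> \<cdot> (\<psi> \<cdot> B) = B"
begin

lemma typing[simp]:
  "\<phi> \<in> Mor C" "Dom C \<phi> = X" "Cod C \<phi> = X" "\<psi> \<in> Mor C" "Dom C \<psi> = X" "Cod C \<psi> = X"
  "A \<in> Mor C" "Dom C A = X" "Cod C A = X" "B \<in> Mor C" "Dom C B = X" "Cod C B = X"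
  using homs by (simp_all add: Hom_iff)

lemma phi_sandwich: "\<phi> \<cdot> ((A \<cdot> \<psi>) \<cdot> B) = B"
  using left(1) right(2) comp_eq_extend[OF left(1), of "\<psi> \<cdot> B"] by simp

lemma sandwich_phi: "((A \<cdot> \<psi>) \<cdot> B) \<cdot> \<phi> = A"
  using left(2) right(1) by simp

lemma idempotent_left: "A \<cdot> A = A"
proof -
  have "A \<cdot> A = A \<cdot> (\<psi> \<cdot> (\<phi> \<cdot> A))" using comp_eq_extend2[OF left(2), of A] by simp
  also have "\<dots> = A" using left by simp
  finally show ?thesis .
qed

lemma idempotent_right: "B \<cdot> B = B"
proof -
  have "B \<cdot> B = B \<cdot> (\<phi> \<cdot> (\<psi> \<cdot> B))" using right(2) by simp
  also have "\<dots> = B" using right comp_eq_extend[OF right(1), of "\<psi> \<cdot> B"] by simp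
  finally show ?thesis .
qed

lemma sandwich_inner: "\<phi> \<cdot> (((A \<cdot> \<psi>) \<cdot> B) \<cdot> \<phi>) = \<phi>"
  and sandwich_reflexive: "((A \<cdot> \<psi>) \<cdot> B) \<cdot> (\<phi> \<cdot> ((A \<cdot> \<psi>) \<cdot> B)) = (A \<cdot> \<psi>) \<cdot> B"
  using sandwich_phi phi_sandwich left(1) right(1) idempotent_right comp_eq_extend[OF idempotent_right]
  by simp_all

lemma is_MP_inverse_sandwich:
  assumes "str C A = A" "str C B = B"
  shows "is_MP_inverse C \<phi> ((A \<cdot> \<psi>) \<cdot> B)"
  using assms sandwich_inner sandwich_reflexive phi_sandwich sandwich_phi right(1)
    comp_eq_extend[OF idempotent_left]
  by (simp add: is_MP_inverse_def Hom_iff del: str_comp)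

lemma is_group_inverse_sandwich:
  assumes "A = B"
  shows "is_group_inverse C \<phi> ((A \<cdot> \<psi>) \<cdot> B)"
  using assms sandwich_inner sandwich_reflexive phi_sandwich sandwich_phi right(1)
    comp_eq_extend[OF idempotent_right]
  by (simp add: is_group_inverse_def Hom_iff)

lemma is_core_inverse_sandwich:
  assumes "str C B = B" "A \<cdot> \<phi> = \<phi>" "B \<cdot> A = A"
  shows "is_core_inverse C \<phi> ((A \<cdot> \<psi>) \<cdot> B)"
proof -
  let ?\<chi> = "(A \<cdot> \<psi>) \<cdot> B"
  have "\<phi> \<cdot> (?\<chi> \<cdot> ?\<chi>) = (\<phi> \<cdot> ?\<chi>) \<cdot> ?\<chi>" by simp
  also have "\<dots> = (B \<cdot> A) \<cdot> (\<psi> \<cdot> B)" by (simp only: phi_sandwich) simp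
  also have "\<dots> = ?\<chi>" using assms(3) by simp
  finally have \<phi>\<chi>\<chi>: "\<phi> \<cdot> (?\<chi> \<cdot> ?\<chi>) = ?\<chi>" .
  have "?\<chi> \<cdot> (\<phi> \<cdot> \<phi>) = (?\<chi> \<cdot> \<phi>) \<cdot> \<phi>" by simp
  also have "\<dots> = \<phi>" by (simp only: sandwich_phi assms(2))
  finally have \<chi>\<phi>\<phi>: "?\<chi> \<cdot> (\<phi> \<cdot> \<phi>) = \<phi>" .
  show ?thesis
    using \<phi>\<chi>\<chi> \<chi>\<phi>\<phi> assms(1) phi_sandwich
    by (simp add: is_core_inverse_def Hom_iff del: str_comp comp_assoc)
qed

lemma is_dual_core_inverse_sandwich:
  assumes "str C A = A" "\<phi> \<cdot> B = \<phi>" "B \<cdot> A = B"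
  shows "is_dual_core_inverse C \<phi> ((A \<cdot> \<psi>) \<cdot> B)"
proof -
  let ?\<chi> = "(A \<cdot> \<psi>) \<cdot> B"
  have "(?\<chi> \<cdot> ?\<chi>) \<cdot> \<phi> = ?\<chi> \<cdot> (?\<chi> \<cdot> \<phi>)" by simp
  also have "\<dots> = (A \<cdot> \<psi>) \<cdot> (B \<cdot> A)" by (simp only: sandwich_phi) simp
  also have "\<dots> = ?\<chi>" using assms(3) by simp
  finally have \<chi>\<chi>\<phi>: "(?\<chi> \<cdot> ?\<chi>) \<cdot> \<phi> = ?\<chi>" .
  have "(\<phi> \<cdot> \<phi>) \<cdot> ?\<chi> = \<phi> \<cdot> (\<phi> \<cdot> ?\<chi>)" by simp
  also have "\<dots> = \<phi>" by (simp only: phi_sandwich assms(2))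
  finally have \<phi>\<phi>\<chi>: "(\<phi> \<cdot> \<phi>) \<cdot> ?\<chi> = \<phi>" .
  show ?thesis
    using \<chi>\<chi>\<phi> \<phi>\<phi>\<chi> assms(1) sandwich_phi
    by (simp add: is_dual_core_inverse_def Hom_iff del: str_comp comp_assoc)
qed

end

section \<open>Kernels and cokernels\<close>

locale kernel_cokernel = additive_inv_cat +
  fixes X K L and \<phi> \<kappa> \<mu>
  assumes obs: "X \<in> Ob C" "K \<in> Ob C" "L \<in> Ob C"
    and phi: "\<phi> \<in> Hom C X X"
    and kap: "\<kappa> \<in> Hom C K X" "is_kernel C \<phi> \<kappa>"
    and lam: "\<mu> \<in> Hom C X L" "is_cokernel C \<phi> \<mu>"
begin

lemma typing[simp]: "X \<in> Ob C" "K \<in> Ob C" "L \<in> Ob C" "\<phi> \<in> Mor C" "Dom C \<phi> = X" "Cod C \<phi> = X"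
  "\<kappa> \<in> Mor C" "Dom C \<kappa> = K" "Cod C \<kappa> = X" "\<mu> \<in> Mor C" "Dom C \<mu> = X" "Cod C \<mu> = L"
  using obs phi kap lam by (auto simp: Hom_iff)

lemma kernel_comp[simp]: "\<kappa> \<cdot> \<phi> = zro C K X"
  and comp_cokernel[simp]: "\<phi> \<cdot> \<mu> = zro C X L"
  using kap lam by (auto simp: is_kernel_def is_cokernel_def)

lemma kernel_comp_extend[simp]: "\<lbrakk>h \<in> Mor C; Dom C h = X\<rbrakk> \<Longrightarrow> \<kappa> \<cdot> (\<phi> \<cdot> h) = zro C K (Cod C h)"
  and comp_cokernel_extend[simp]: "\<lbrakk>h \<in> Mor C; Dom C h = L\<rbrakk> \<Longrightarrow> \<phi> \<cdot> (\<mu> \<cdot> h) = zro C X (Cod C h)"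
  using comp_eq_extend[OF kernel_comp, of h] comp_eq_extend[OF comp_cokernel, of h] by simp_all

lemma kernel_universal:
  assumes "\<alpha> \<in> Mor C" "Cod C \<alpha> = X" "\<alpha> \<cdot> \<phi> = zro C (Dom C \<alpha>) X"
  shows "\<exists>!\<alpha>'. \<alpha>' \<in> Hom C (Dom C \<alpha>) K \<and> \<alpha> = \<alpha>' \<cdot> \<kappa>"
  using kap(2) assms unfolding is_kernel_def by simp

lemma cokernel_universal:
  assumes "\<beta> \<in> Mor C" "Dom C \<beta> = X" "\<phi> \<cdot> \<beta> = zro C X (Cod C \<beta>)"
  shows "\<exists>!\<beta>'. \<beta>' \<in> Hom C L (Cod C \<beta>) \<and> \<beta> = \<mu> \<cdot> \<beta>'"
  using lam(2) assms unfolding is_cokernel_def by simp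

lemma kernel_cancel:
  assumes "u \<in> Hom C A K" "v \<in> Hom C A K" "u \<cdot> \<kappa> = v \<cdot> \<kappa>"
  shows "u = v"
proof -
  have "(u \<cdot> \<kappa>) \<cdot> \<phi> = zro C A X" using assms(1) dom_ob by (simp add: Hom_iff)
  then have "\<exists>!\<alpha>'. \<alpha>' \<in> Hom C A K \<and> u \<cdot> \<kappa> = \<alpha>' \<cdot> \<kappa>"
    using kernel_universal[of "u \<cdot> \<kappa>"] assms(1) by (simp add: Hom_iff)
  then show ?thesis using assms by blast
qed

lemma cokernel_cancel:
  assumes "u \<in> Hom C L A" "v \<in> Hom C L A" "\<mu> \<cdot> u = \<mu> \<cdot> v"
  shows "u = v"
proof -
  have "\<phi> \<cdot> (\<mu> \<cdot> u) = zro C X A" using assms(1) by (simp add: Hom_iff)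
  then have "\<exists>!\<beta>'. \<beta>' \<in> Hom C L A \<and> \<mu> \<cdot> u = \<mu> \<cdot> \<beta>'"
    using cokernel_universal[of "\<mu> \<cdot> u"] assms(1) by (simp add: Hom_iff)
  then show ?thesis using assms by blast
qed

lemma complement_factors_through_kernel:
  assumes \<psi>: "\<psi> \<in> Hom C X X" "\<phi> \<cdot> (\<psi> \<cdot> \<phi>) = \<phi>"
  obtains a where "a \<in> Hom C X K" "mns C (idt C X) (\<phi> \<cdot> \<psi>) = a \<cdot> \<kappa>" "\<kappa> \<cdot> a = idt C K"
proof -
  have "mns C (idt C X) (\<phi> \<cdot> \<psi>) \<cdot> \<phi> = zro C X X" using \<psi> by (simp add: Hom_iff mns_comp)
  then obtain a where a: "a \<in> Hom C X K" "mns C (idt C X) (\<phi> \<cdot> \<psi>) = a \<cdot> \<kappa>"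
    using kernel_universal[of "mns C (idt C X) (\<phi> \<cdot> \<psi>)"] \<psi> by (auto simp: Hom_iff)
  have "\<kappa> \<cdot> mns C (idt C X) (\<phi> \<cdot> \<psi>) = \<kappa>" using \<psi> by (simp add: Hom_iff comp_mns)
  then have eq: "(\<kappa> \<cdot> a) \<cdot> \<kappa> = idt C K \<cdot> \<kappa>" using a by (simp add: Hom_iff)
  have "\<kappa> \<cdot> a = idt C K" by (rule kernel_cancel[OF _ _ eq]) (use a in \<open>simp_all add: Hom_iff\<close>)
  with a show thesis by (rule that)
qed

lemma complement_factors_through_cokernel:
  assumes \<psi>: "\<psi> \<in> Hom C X X" "\<phi> \<cdot> (\<psi> \<cdot> \<phi>) = \<phi>"
  obtains b where "b \<in> Hom C L X" "mns C (idt C X) (\<psi> \<cdot> \<phi>) = \<mu> \<cdot> b" "b \<cdot> \<mu> = idt C L"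
proof -
  have "\<phi> \<cdot> mns C (idt C X) (\<psi> \<cdot> \<phi>) = zro C X X" using \<psi> by (simp add: Hom_iff comp_mns)
  then obtain b where b: "b \<in> Hom C L X" "mns C (idt C X) (\<psi> \<cdot> \<phi>) = \<mu> \<cdot> b"
    using cokernel_universal[of "mns C (idt C X) (\<psi> \<cdot> \<phi>)"] \<psi> by (auto simp: Hom_iff)
  have "mns C (idt C X) (\<psi> \<cdot> \<phi>) \<cdot> \<mu> = \<mu>" using \<psi> by (simp add: Hom_iff mns_comp)
  then have eq: "\<mu> \<cdot> (b \<cdot> \<mu>) = \<mu> \<cdot> idt C L" using b by (simp add: Hom_iff)
  have "b \<cdot> \<mu> = idt C L" by (rule cokernel_cancel[OF _ _ eq]) (use b in \<open>simp_all add: Hom_iff\<close>)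
  with b show thesis by (rule that)
qed

lemma kernel_annihilator_absorbs:
  assumes \<psi>: "\<psi> \<in> Hom C X X" "\<phi> \<cdot> (\<psi> \<cdot> \<phi>) = \<phi>"
    and E: "E \<in> Mor C" "Dom C E = X" "\<kappa> \<cdot> E = zro C K (Cod C E)"
  shows "\<phi> \<cdot> (\<psi> \<cdot> E) = E"
proof -
  obtain a where a: "a \<in> Hom C X K" "mns C (idt C X) (\<phi> \<cdot> \<psi>) = a \<cdot> \<kappa>"
    using complement_factors_through_kernel[OF \<psi>] .
  have "mns C E (\<phi> \<cdot> (\<psi> \<cdot> E)) = mns C (idt C X) (\<phi> \<cdot> \<psi>) \<cdot> E"
    using \<psi>(1) E by (simp add: Hom_iff mns_comp)
  also have "\<dots> = zro C X (Cod C E)" using a E cod_ob by (simp add: Hom_iff)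
  finally show ?thesis using \<psi>(1) E mns_eq_zro_iff[of E "\<phi> \<cdot> (\<psi> \<cdot> E)"] by (simp add: Hom_iff)
qed

lemma cokernel_annihilator_absorbs:
  assumes \<psi>: "\<psi> \<in> Hom C X X" "\<phi> \<cdot> (\<psi> \<cdot> \<phi>) = \<phi>"
    and E: "E \<in> Mor C" "Cod C E = X" "E \<cdot> \<mu> = zro C (Dom C E) L"
  shows "E \<cdot> (\<psi> \<cdot> \<phi>) = E"
proof -
  obtain b where b: "b \<in> Hom C L X" "mns C (idt C X) (\<psi> \<cdot> \<phi>) = \<mu> \<cdot> b"
    using complement_factors_through_cokernel[OF \<psi>] .
  have "mns C E (E \<cdot> (\<psi> \<cdot> \<phi>)) = E \<cdot> mns C (idt C X) (\<psi> \<cdot> \<phi>)"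
    using \<psi>(1) E by (simp add: Hom_iff comp_mns)
  also have "\<dots> = zro C (Dom C E) X" using b E dom_ob comp_eq_extend[OF E(3)] by (simp add: Hom_iff)
  finally show ?thesis using \<psi>(1) E mns_eq_zro_iff[of E "E \<cdot> (\<psi> \<cdot> \<phi>)"] by (simp add: Hom_iff)
qed

lemma invertible_kernel_gram:
  assumes \<psi>: "\<psi> \<in> Hom C X X" "\<phi> \<cdot> (\<psi> \<cdot> \<phi>) = \<phi>" "str C (\<phi> \<cdot> \<psi>) = \<phi> \<cdot> \<psi>"
  shows "invertible C (\<kappa> \<cdot> str C \<kappa>)"
proof -
  obtain a where a: "a \<in> Hom C X K" "mns C (idt C X) (\<phi> \<cdot> \<psi>) = a \<cdot> \<kappa>" "\<kappa> \<cdot> a = idt C K"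
    using complement_factors_through_kernel[OF \<psi>(1,2)] .
  have "str C a \<cdot> str C \<kappa> = idt C K" using a(1) arg_cong[OF a(3), of "str C"] by (simp add: Hom_iff)
  moreover have "str C (mns C (idt C X) (\<phi> \<cdot> \<psi>)) = mns C (idt C X) (\<phi> \<cdot> \<psi>)"
    using \<psi> by (simp add: Hom_iff del: str_comp)
  then have "a \<cdot> \<kappa> = str C \<kappa> \<cdot> str C a" using a(1) by (simp add: a(2) Hom_iff)
  ultimately have "is_inverse C (\<kappa> \<cdot> str C \<kappa>) (str C a \<cdot> a)"
    using a by (intro is_inverse_comp_split) (simp_all add: Hom_iff)
  then show ?thesis unfolding invertible_def ..
qed

lemma invertible_cokernel_gram:
  assumes \<psi>: "\<psi> \<in> Hom C X X" "\<phi> \<cdot> (\<psi> \<cdot> \<phi>) = \<phi>" "str C (\<psi> \<cdot> \<phi>) = \<psi> \<cdot> \<phi>"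
  shows "invertible C (str C \<mu> \<cdot> \<mu>)"
proof -
  obtain b where b: "b \<in> Hom C L X" "mns C (idt C X) (\<psi> \<cdot> \<phi>) = \<mu> \<cdot> b" "b \<cdot> \<mu> = idt C L"
    using complement_factors_through_cokernel[OF \<psi>(1,2)] .
  have "str C \<mu> \<cdot> str C b = idt C L" using b(1) arg_cong[OF b(3), of "str C"] by (simp add: Hom_iff)
  moreover have "str C (mns C (idt C X) (\<psi> \<cdot> \<phi>)) = mns C (idt C X) (\<psi> \<cdot> \<phi>)"
    using \<psi> by (simp add: Hom_iff del: str_comp)
  then have "str C b \<cdot> str C \<mu> = \<mu> \<cdot> b" using b(1) by (simp add: b(2) Hom_iff)
  ultimately have "is_inverse C (str C \<mu> \<cdot> \<mu>) (b \<cdot> str C b)"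
    using b by (intro is_inverse_comp_split) (simp_all add: Hom_iff)
  then show ?thesis unfolding invertible_def ..
qed

lemma invertible_kernel_cokernel:
  assumes \<psi>: "\<psi> \<in> Hom C X X" "\<phi> \<cdot> (\<psi> \<cdot> \<phi>) = \<phi>" "\<phi> \<cdot> \<psi> = \<psi> \<cdot> \<phi>"
  shows "invertible C (\<kappa> \<cdot> \<mu>)"
proof -
  obtain a where a: "a \<in> Hom C X K" "mns C (idt C X) (\<phi> \<cdot> \<psi>) = a \<cdot> \<kappa>" "\<kappa> \<cdot> a = idt C K"
    using complement_factors_through_kernel[OF \<psi>(1,2)] .
  obtain b where b: "b \<in> Hom C L X" "mns C (idt C X) (\<psi> \<cdot> \<phi>) = \<mu> \<cdot> b" "b \<cdot> \<mu> = idt C L"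
    using complement_factors_through_cokernel[OF \<psi>(1,2)] .
  have "a \<cdot> \<kappa> = \<mu> \<cdot> b" using a(2) b(2) \<psi>(3) by simp
  then have "is_inverse C (\<kappa> \<cdot> \<mu>) (b \<cdot> a)"
    using a b kap(1) lam(1) by (intro is_inverse_comp_split) simp_all
  then show ?thesis unfolding invertible_def ..
qed

lemma cokernel_complement:
  assumes s: "s \<in> Hom C L X" "s \<cdot> \<mu> = idt C L"
  shows "mns C (idt C X) (\<mu> \<cdot> s) \<in> Hom C X X" "\<phi> \<cdot> mns C (idt C X) (\<mu> \<cdot> s) = \<phi>"
    "mns C (idt C X) (\<mu> \<cdot> s) \<cdot> \<mu> = zro C X L"
  using s by (simp_all add: Hom_iff comp_mns mns_comp)

lemma kernel_complement:
  assumes t: "t \<in> Hom C X K" "\<kappa> \<cdot> t = idt C K"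
  shows "mns C (idt C X) (t \<cdot> \<kappa>) \<in> Hom C X X" "mns C (idt C X) (t \<cdot> \<kappa>) \<cdot> \<phi> = \<phi>"
    "\<kappa> \<cdot> mns C (idt C X) (t \<cdot> \<kappa>) = zro C K X"
  using t comp_eq_extend[OF t(2)] by (simp_all add: Hom_iff comp_mns mns_comp)

lemma cokernel_complement_absorbs:
  assumes "s \<in> Hom C L X" "E \<in> Mor C" "Cod C E = X" "E \<cdot> \<mu> = zro C (Dom C E) L"
  shows "E \<cdot> mns C (idt C X) (\<mu> \<cdot> s) = E"
  using assms dom_ob comp_eq_extend[OF assms(4)] by (simp add: Hom_iff comp_mns)

lemma kernel_complement_absorbs:
  assumes "t \<in> Hom C X K" "E \<in> Mor C" "Dom C E = X" "\<kappa> \<cdot> E = zro C K (Cod C E)"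
  shows "mns C (idt C X) (t \<cdot> \<kappa>) \<cdot> E = E"
  using assms cod_ob by (simp add: Hom_iff mns_comp)

lemma gram_projectors:
  assumes inv: "invertible C (\<kappa> \<cdot> \<mu>)" "invertible C (\<kappa> \<cdot> str C \<kappa>)" "invertible C (str C \<mu> \<cdot> \<mu>)"
  defines "P \<equiv> mns C (idt C X) (cmp C (cmp C \<mu> (inverse C (cmp C (str C \<mu>) \<mu>))) (str C \<mu>))"
    and "Q \<equiv> mns C (idt C X) (cmp C (cmp C (str C \<kappa>) (inverse C (cmp C \<kappa> (str C \<kappa>)))) \<kappa>)"
    and "R \<equiv> mns C (idt C X) (cmp C (cmp C \<mu> (inverse C (cmp C \<kappa> \<mu>))) \<kappa>)"
  shows "P \<in> Hom C X X" "\<phi> \<cdot> P = \<phi>" "P \<cdot> \<mu> = zro C X L" "str C P = P"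
    and "Q \<in> Hom C X X" "Q \<cdot> \<phi> = \<phi>" "\<kappa> \<cdot> Q = zro C K X" "str C Q = Q"
    and "R \<in> Hom C X X" "\<phi> \<cdot> R = \<phi>" "R \<cdot> \<mu> = zro C X L" "R \<cdot> \<phi> = \<phi>" "\<kappa> \<cdot> R = zro C K X"
    and "Q \<cdot> R = R" "R \<cdot> P = R"
proof -
  define i1 i2 i3 where "i1 = inverse C (\<kappa> \<cdot> \<mu>)" and "i2 = inverse C (\<kappa> \<cdot> str C \<kappa>)"
    and "i3 = inverse C (str C \<mu> \<cdot> \<mu>)"
  have inv1: "is_inverse C (\<kappa> \<cdot> \<mu>) i1" and inv2: "is_inverse C (\<kappa> \<cdot> str C \<kappa>) i2"
    and inv3: "is_inverse C (str C \<mu> \<cdot> \<mu>) i3"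
    using inv is_inverse_inverse by (simp_all add: i1_def i2_def i3_def)
  have i1: "i1 \<in> Hom C L K" "(\<kappa> \<cdot> \<mu>) \<cdot> i1 = idt C K" "i1 \<cdot> (\<kappa> \<cdot> \<mu>) = idt C L"
    and i2: "i2 \<in> Hom C K K" "(\<kappa> \<cdot> str C \<kappa>) \<cdot> i2 = idt C K"
    and i3: "i3 \<in> Hom C L L" "i3 \<cdot> (str C \<mu> \<cdot> \<mu>) = idt C L"
    using inv1 inv2 inv3 by (simp_all add: is_inverse_def)
  have sa: "str C i2 = i2" "str C i3 = i3"
    using self_adjoint_inverse[OF _ _ inv2] self_adjoint_inverse[OF _ _ inv3] by simp_all
  have P_eq: "P = mns C (idt C X) (\<mu> \<cdot> (i3 \<cdot> str C \<mu>))"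
    and Q_eq: "Q = mns C (idt C X) ((str C \<kappa> \<cdot> i2) \<cdot> \<kappa>)"
    and R_eq: "R = mns C (idt C X) ((\<mu> \<cdot> i1) \<cdot> \<kappa>)" "R = mns C (idt C X) (\<mu> \<cdot> (i1 \<cdot> \<kappa>))"
    using i1(1) i2(1) i3(1) by (simp_all add: P_def Q_def R_def i1_def i2_def i3_def Hom_iff)
  have s3: "i3 \<cdot> str C \<mu> \<in> Hom C L X" "(i3 \<cdot> str C \<mu>) \<cdot> \<mu> = idt C L"
    and t2: "str C \<kappa> \<cdot> i2 \<in> Hom C X K" "\<kappa> \<cdot> (str C \<kappa> \<cdot> i2) = idt C K"
    and s1: "i1 \<cdot> \<kappa> \<in> Hom C L X" "(i1 \<cdot> \<kappa>) \<cdot> \<mu> = idt C L"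
    and t1: "\<mu> \<cdot> i1 \<in> Hom C X K" "\<kappa> \<cdot> (\<mu> \<cdot> i1) = idt C K"
    using i1 i2 i3 by (simp_all add: Hom_iff)
  show P: "P \<in> Hom C X X" "\<phi> \<cdot> P = \<phi>" "P \<cdot> \<mu> = zro C X L"
    using cokernel_complement[OF s3, folded P_eq] by simp_all
  show Q: "Q \<in> Hom C X X" "Q \<cdot> \<phi> = \<phi>" "\<kappa> \<cdot> Q = zro C K X"
    using kernel_complement[OF t2, folded Q_eq] by simp_all
  show R: "R \<in> Hom C X X" "\<phi> \<cdot> R = \<phi>" "R \<cdot> \<mu> = zro C X L" "R \<cdot> \<phi> = \<phi>" "\<kappa> \<cdot> R = zro C K X"
    using cokernel_complement[OF s1, folded R_eq(2)] kernel_complement[OF t1, folded R_eq(1)]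
    by simp_all
  show "str C P = P" "str C Q = Q"
    using i2(1) i3(1) sa by (simp_all add: P_eq Q_eq Hom_iff)
  show "Q \<cdot> R = R"
    using kernel_complement_absorbs[OF t2(1), of R, folded Q_eq] R by (simp add: Hom_iff)
  show "R \<cdot> P = R"
    using cokernel_complement_absorbs[OF s3(1), of R, folded P_eq] R by (simp add: Hom_iff)
qed

lemma generalized_inverses_of_invertible_grams:
  assumes \<psi>: "\<psi> \<in> Hom C X X" "\<phi> \<cdot> (\<psi> \<cdot> \<phi>) = \<phi>"
    and inv: "invertible C (\<kappa> \<cdot> \<mu>)" "invertible C (\<kappa> \<cdot> str C \<kappa>)" "invertible C (str C \<mu> \<cdot> \<mu>)"
  defines "P \<equiv> mns C (idt C X) (cmp C (cmp C \<mu> (inverse C (cmp C (str C \<mu>) \<mu>))) (str C \<mu>))"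
    and "Q \<equiv> mns C (idt C X) (cmp C (cmp C (str C \<kappa>) (inverse C (cmp C \<kappa> (str C \<kappa>)))) \<kappa>)"
    and "R \<equiv> mns C (idt C X) (cmp C (cmp C \<mu> (inverse C (cmp C \<kappa> \<mu>))) \<kappa>)"
  shows "is_MP_inverse C \<phi> ((P \<cdot> \<psi>) \<cdot> Q)" "is_group_inverse C \<phi> ((R \<cdot> \<psi>) \<cdot> R)"
    "is_core_inverse C \<phi> ((R \<cdot> \<psi>) \<cdot> Q)" "is_dual_core_inverse C \<phi> ((P \<cdot> \<psi>) \<cdot> R)"
proof -
  note PQR = gram_projectors[OF inv, folded P_def Q_def R_def]
  have P_absorbs: "P \<cdot> (\<psi> \<cdot> \<phi>) = P" and Q_absorbs: "\<phi> \<cdot> (\<psi> \<cdot> Q) = Q"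
    and R_absorbs: "R \<cdot> (\<psi> \<cdot> \<phi>) = R" "\<phi> \<cdot> (\<psi> \<cdot> R) = R"
    using cokernel_annihilator_absorbs[OF \<psi>, of P] kernel_annihilator_absorbs[OF \<psi>, of Q]
      cokernel_annihilator_absorbs[OF \<psi>, of R] kernel_annihilator_absorbs[OF \<psi>, of R] PQR
    by (simp_all add: Hom_iff)
  interpret PQ: projector_sandwich C X \<phi> \<psi> P Q
    using phi \<psi> PQR P_absorbs Q_absorbs by unfold_locales simp_all
  interpret RR: projector_sandwich C X \<phi> \<psi> R R
    using phi \<psi> PQR R_absorbs by unfold_locales simp_all
  interpret RQ: projector_sandwich C X \<phi> \<psi> R Q
    using phi \<psi> PQR R_absorbs Q_absorbs by unfold_locales simp_all
  interpret PR: projector_sandwich C X \<phi> \<psi> P R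
    using phi \<psi> PQR P_absorbs R_absorbs by unfold_locales simp_all
  show "is_MP_inverse C \<phi> ((P \<cdot> \<psi>) \<cdot> Q)" using PQR by (intro PQ.is_MP_inverse_sandwich)
  show "is_group_inverse C \<phi> ((R \<cdot> \<psi>) \<cdot> R)" by (intro RR.is_group_inverse_sandwich refl)
  show "is_core_inverse C \<phi> ((R \<cdot> \<psi>) \<cdot> Q)" using PQR by (intro RQ.is_core_inverse_sandwich)
  show "is_dual_core_inverse C \<phi> ((P \<cdot> \<psi>) \<cdot> R)" using PQR by (intro PR.is_dual_core_inverse_sandwich)
qed

lemma regular_iff_inner_inverse:
  "regular C \<phi> \<longleftrightarrow> (\<exists>\<psi>\<in>Hom C X X. \<phi> \<cdot> (\<psi> \<cdot> \<phi>) = \<phi>)"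
  unfolding regular_def by (auto simp: Hom_iff)

lemma invertible_grams_of_MP_group_invertible:
  assumes "MP_invertible C \<phi>" "group_invertible C \<phi>"
  shows "regular C \<phi> \<and> invertible C (\<kappa> \<cdot> \<mu>) \<and> invertible C (\<kappa> \<cdot> str C \<kappa>) \<and> invertible C (str C \<mu> \<cdot> \<mu>)"
proof -
  obtain y z where y: "is_MP_inverse C \<phi> y" and z: "is_group_inverse C \<phi> z"
    using assms unfolding MP_invertible_def group_invertible_def by blast
  note hy = is_MP_inverseD[OF phi y] and hz = is_group_inverseD[OF phi z]
  show ?thesis
    using regular_iff_inner_inverse hy(1,2) invertible_kernel_gram[OF hy(1,2,4)]
      invertible_cokernel_gram[OF hy(1,2,5)] invertible_kernel_cokernel[OF hz(1,2,4)]
    by blast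
qed

lemma invertible_grams_of_core_dual_core_invertible:
  assumes "core_invertible C \<phi>" "dual_core_invertible C \<phi>"
  shows "regular C \<phi> \<and> invertible C (\<kappa> \<cdot> \<mu>) \<and> invertible C (\<kappa> \<cdot> str C \<kappa>) \<and> invertible C (str C \<mu> \<cdot> \<mu>)"
proof -
  obtain y z where y: "is_core_inverse C \<phi> y" and z: "is_dual_core_inverse C \<phi> z"
    using assms unfolding core_invertible_def dual_core_invertible_def by blast
  note hy = is_core_inverseD[OF phi y] and hz = is_dual_core_inverseD[OF phi z]
  note hg = is_group_inverseD[OF phi hy(5)]
  show ?thesis
    using regular_iff_inner_inverse hy(1,3) invertible_kernel_gram[OF hy(1,3,2)]
      invertible_cokernel_gram[OF hz(1,3,2)] invertible_kernel_cokernel[OF hg(1,2,4)]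
    by blast
qed

lemma generalized_inverse_formulas:
  assumes \<psi>: "\<psi> \<in> Hom C X X" "(\<phi> \<cdot> \<psi>) \<cdot> \<phi> = \<phi>"
    and inv: "invertible C (\<kappa> \<cdot> \<mu>)" "invertible C (\<kappa> \<cdot> str C \<kappa>)" "invertible C (str C \<mu> \<cdot> \<mu>)"
  defines "P \<equiv> mns C (idt C X) (cmp C (cmp C \<mu> (inverse C (cmp C (str C \<mu>) \<mu>))) (str C \<mu>))"
    and "Q \<equiv> mns C (idt C X) (cmp C (cmp C (str C \<kappa>) (inverse C (cmp C \<kappa> (str C \<kappa>)))) \<kappa>)"
    and "R \<equiv> mns C (idt C X) (cmp C (cmp C \<mu> (inverse C (cmp C \<kappa> \<mu>))) \<kappa>)"
  shows "MP_inv C \<phi> = (P \<cdot> \<psi>) \<cdot> Q \<and> group_inv C \<phi> = (R \<cdot> \<psi>) \<cdot> R \<and>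
    core_inv C \<phi> = (R \<cdot> \<psi>) \<cdot> Q \<and> dual_core_inv C \<phi> = (P \<cdot> \<psi>) \<cdot> R"
proof -
  have "\<phi> \<cdot> (\<psi> \<cdot> \<phi>) = \<phi>" using \<psi> by (simp add: Hom_iff)
  note inverses = generalized_inverses_of_invertible_grams[OF \<psi>(1) this inv, folded P_def Q_def R_def]
  show ?thesis
    using MP_inv_eqI[OF phi inverses(1)] group_inv_eqI[OF phi inverses(2)]
      core_inv_eqI[OF phi inverses(3)] dual_core_inv_eqI[OF phi inverses(4)]
    by blast
qed

end

theorem corollary3p5:
  fixes C :: "('o, 'm, 'x) icat_scheme"
    and X K L :: 'o and \<phi> \<kappa> \<mu> :: 'm
  assumes cat: "additive_inv_category C"
    and obs: "X \<in> Ob C" "K \<in> Ob C" "L \<in> Ob C"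
    and phi: "\<phi> \<in> Hom C X X"
    and kap: "\<kappa> \<in> Hom C K X" "is_kernel C \<phi> \<kappa>"
    and lam: "\<mu> \<in> Hom C X L" "is_cokernel C \<phi> \<mu>"
  shows "((core_invertible C \<phi> \<and> dual_core_invertible C \<phi>) \<longleftrightarrow>
            (MP_invertible C \<phi> \<and> group_invertible C \<phi>)) \<and>
         ((MP_invertible C \<phi> \<and> group_invertible C \<phi>) \<longleftrightarrow>
            (regular C \<phi> \<and> invertible C (cmp C \<kappa> \<mu>) \<and>
             invertible C (cmp C \<kappa> (str C \<kappa>)) \<and> invertible C (cmp C (str C \<mu>) \<mu>))) \<and>
         ((core_invertible C \<phi> \<and> dual_core_invertible C \<phi>) \<longrightarrow>
           (\<forall>\<psi>\<in>Hom C X X. cmp C (cmp C \<phi> \<psi>) \<phi> = \<phi> \<longrightarrow>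
             (let P = mns C (idt C X) (cmp C (cmp C \<mu> (inverse C (cmp C (str C \<mu>) \<mu>))) (str C \<mu>));
                  Q = mns C (idt C X) (cmp C (cmp C (str C \<kappa>) (inverse C (cmp C \<kappa> (str C \<kappa>)))) \<kappa>);
                  R = mns C (idt C X) (cmp C (cmp C \<mu> (inverse C (cmp C \<kappa> \<mu>))) \<kappa>)
              in MP_inv C \<phi> = cmp C (cmp C P \<psi>) Q \<and>
                 group_inv C \<phi> = cmp C (cmp C R \<psi>) R \<and>
                 core_inv C \<phi> = cmp C (cmp C R \<psi>) Q \<and>
                 dual_core_inv C \<phi> = cmp C (cmp C P \<psi>) R)))"
proof -
  interpret kernel_cokernel C X K L \<phi> \<kappa> \<mu>
    using assms by unfold_locales
  have "core_invertible C \<phi> \<and> dual_core_invertible C \<phi> \<and> MP_invertible C \<phi> \<and> group_invertible C \<phi>"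
    if "regular C \<phi>" "invertible C (\<kappa> \<cdot> \<mu>)" "invertible C (\<kappa> \<cdot> str C \<kappa>)"
      "invertible C (str C \<mu> \<cdot> \<mu>)"
    using that generalized_inverses_of_invertible_grams
    unfolding regular_iff_inner_inverse core_invertible_def dual_core_invertible_def
      MP_invertible_def group_invertible_def
    by blast
  then show ?thesis
    unfolding Let_def
    using invertible_grams_of_MP_group_invertible invertible_grams_of_core_dual_core_invertible
      generalized_inverse_formulas
    by blast
qed

end
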